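(* Let $\Lambda$ be a lattice of rank $n$, $U=\Lambda\otimes\mathbb{R}$, and let $X\subset\Lambda$ be a linearly independent list forming a basis of $U$. For $A\subseteq X$ let $h(A)$ be the number of points of $\Lambda$ that are internal to the face $\mathcal{Z}(A)$ of the parallelepiped $\mathcal{Z}(X)$. Then for every $A\subseteq X$, $$h(A)=\sum_{B\subseteq A}(-1)^{|A|-|B|}m(B).$$
   Context: For a list $Y$, $\mathcal{Z}(Y)=\{\sum_{y\in Y}t_y y: 0\le t_y\le 1\}$; when $X$ is a basis, $\mathcal{Z}(X)$ is a parallelepiped and $\mathcal{Z}(A)$ is a face of it for each $A\subseteq X$ ($\mathcal{Z}(\emptyset)=\{0\}$). A point $p\in\Lambda\cap\mathcal{Z}(X)$ is internal to a face $F$ of $\mathcal{Z}(X)$ if $F$ is the smallest face of $\mathcal{Z}(X)$ containing $p$. For $B\subseteq X$, $m(B)=[\Lambda\cap\langle B\rangle_{\mathbb{R}}:\langle B\rangle_{\mathbb{Z}}]$, where $\langle B\rangle_{\mathbb{R}}$ and $\langle B\rangle_{\mathbb{Z}}$ are the real span and the subgroup generated by $B$. *)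

theory Defs
  imports "HOL-Analysis.Analysis"
begin

definition int_span :: "'a::real_vector set \<Rightarrow> 'a set" where
  "int_span B = {\<Sum>b\<in>B. of_int (c b) *\<^sub>R b | c. True}"

definition zonotope :: "'a::real_vector set \<Rightarrow> 'a set" where
  "zonotope Y = {\<Sum>y\<in>Y. t y *\<^sub>R y | t. \<forall>y\<in>Y. 0 \<le> t y \<and> t y \<le> 1}"

definition internal_to :: "'a::real_normed_vector \<Rightarrow> 'a set \<Rightarrow> 'a set \<Rightarrow> bool" where
  "internal_to p F P \<longleftrightarrow> F face_of P \<and> p \<in> F \<and>
     (\<forall>G. G face_of P \<and> p \<in> G \<longrightarrow> F \<subseteq> G)"

definition subgroup_index :: "'a::ab_group_add set \<Rightarrow> 'a set \<Rightarrow> nat" where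
  "subgroup_index H' H = card {{y \<in> H'. x - y \<in> H} | x. x \<in> H'}"

definition lattice_mult :: "'a::real_vector set \<Rightarrow> 'a set \<Rightarrow> nat" where
  "lattice_mult \<Lambda> B = subgroup_index (\<Lambda> \<inter> span B) (int_span B)"

end

theory Submission
  imports Defs
begin

text \<open>
  In coordinates with respect to the basis X, the parallelepiped Z(X) is the unit cube, Z(A) is
  the set of points with coordinates in [0,1] on A and 0 off A, and a point is internal to Z(A)
  exactly when its A-coordinates lie in (0,1) and the others vanish. Subtracting integer parts of
  the A-coordinates shows that the lattice points of the half-open box [0,1)^A form a system of
  representatives of (\<Lambda> \<inter> span A) modulo the group generated by A, so there are m(A) of
  them. Sorting these points by the set B of their non-zero coordinates gives
  m(A) = \<Sum> B \<subseteq> A. h(B), and Moebius inversion over the subsets of A gives the formula.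
\<close>

lemma representation_sum_scaled:
  assumes "independent X" "Y \<subseteq> X" "finite Y"
  shows "representation X (\<Sum>y\<in>Y. t y *\<^sub>R y) x = (if x \<in> Y then t x else 0)"
proof -
  have "representation X (\<Sum>y\<in>Y. t y *\<^sub>R y) x = (\<Sum>y\<in>Y. t y * representation X y x)"
    using assms by (simp add: real_vector.representation_sum real_vector.representation_scale
        real_vector.span_base real_vector.span_scale subset_iff)
  also have "\<dots> = (\<Sum>y\<in>Y. if x = y then t y else 0)"
    using assms by (intro sum.cong) (auto simp: real_vector.representation_basis)
  finally show ?thesis
    using assms(3) by simp
qed

lemma face_of_linear_level:
  fixes f :: "'a::euclidean_space \<Rightarrow> real"
  assumes "convex S" "linear f" "\<And>x. x \<in> S \<Longrightarrow> f x \<le> b"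
  shows "{x \<in> S. f x = b} face_of S"
proof -
  define a where "a = (\<Sum>i\<in>Basis. f i *\<^sub>R i)"
  have f: "f x = a \<bullet> x" for x
    using Linear_Algebra.linear_componentwise[OF assms(2), of x 1]
    by (simp add: a_def inner_sum_left inner_commute[of x] mult.commute)
  have "S \<inter> {x. a \<bullet> x = b} face_of S"
    using assms by (intro face_of_Int_supporting_hyperplane_le) (auto simp: f[symmetric])
  moreover have "{x \<in> S. f x = b} = S \<inter> {x. a \<bullet> x = b}"
    by (auto simp: f)
  ultimately show ?thesis
    by simp
qed

lemma subgroup_index_eq_card_transversal:
  fixes H H' R :: "'a::ab_group_add set"
  assumes H: "0 \<in> H" "\<And>a b. a \<in> H \<Longrightarrow> b \<in> H \<Longrightarrow> a - b \<in> H"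
    and R: "R \<subseteq> H'" "\<And>x. x \<in> H' \<Longrightarrow> \<exists>r\<in>R. x - r \<in> H"
      "\<And>r r'. r \<in> R \<Longrightarrow> r' \<in> R \<Longrightarrow> r - r' \<in> H \<Longrightarrow> r = r'"
  shows "subgroup_index H' H = card R"
proof -
  define coset where "coset x = {y \<in> H'. x - y \<in> H}" for x
  have coset_eq: "coset x = coset r" if "x - r \<in> H" for x r
  proof -
    have "x - y \<in> H \<longleftrightarrow> r - y \<in> H" for y
      using H(2)[OF _ that, of "x - y"] H(2)[OF _ H(2)[OF H(1) that], of "r - y"]
      by (auto simp: algebra_simps)
    then show ?thesis
      unfolding coset_def by blast
  qed
  have "inj_on coset R"
  proof (rule inj_onI)
    fix r r'
    assume "r \<in> R" "r' \<in> R" "coset r = coset r'"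
    then have "r \<in> coset r'"
      using R(1) H(1) unfolding coset_def by auto
    then show "r = r'"
      using R(3)[OF \<open>r' \<in> R\<close> \<open>r \<in> R\<close>] unfolding coset_def by simp
  qed
  moreover have "coset ` R = coset ` H'"
    using R(1,2) coset_eq by (auto simp: image_iff) blast
  ultimately have "card (coset ` H') = card R"
    by (metis card_image)
  then show ?thesis
    unfolding subgroup_index_def Setcompr_eq_image coset_def by simp
qed

lemma zero_in_int_span: "0 \<in> int_span B"
  unfolding int_span_def by (auto intro!: exI[of _ "\<lambda>_. 0"])

lemma int_span_add:
  assumes "x \<in> int_span B" "y \<in> int_span B"
  shows "x + y \<in> int_span B"
proof -
  obtain c d where "x = (\<Sum>b\<in>B. of_int (c b) *\<^sub>R b)" "y = (\<Sum>b\<in>B. of_int (d b) *\<^sub>R b)"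
    using assms unfolding int_span_def by blast
  then have "x + y = (\<Sum>b\<in>B. of_int (c b + d b) *\<^sub>R b)"
    by (simp add: scaleR_add_left sum.distrib)
  then show ?thesis
    unfolding int_span_def by (auto intro!: exI[of _ "\<lambda>b. c b + d b"])
qed

lemma int_span_scale:
  assumes "x \<in> int_span B"
  shows "of_int k *\<^sub>R x \<in> int_span B"
proof -
  obtain c where "x = (\<Sum>b\<in>B. of_int (c b) *\<^sub>R b)"
    using assms unfolding int_span_def by blast
  then have "of_int k *\<^sub>R x = (\<Sum>b\<in>B. of_int (k * c b) *\<^sub>R b)"
    by (simp add: scaleR_sum_right)
  then show ?thesis
    unfolding int_span_def by (auto intro!: exI[of _ "\<lambda>b. k * c b"])
qed

lemma int_span_diff: "x \<in> int_span B \<Longrightarrow> y \<in> int_span B \<Longrightarrow> x - y \<in> int_span B"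
  using int_span_add[of x B "of_int (-1) *\<^sub>R y"] int_span_scale[of y B "-1"] by simp

lemma int_span_subset:
  assumes "finite A" "A \<subseteq> int_span B"
  shows "int_span A \<subseteq> int_span B"
proof
  fix x
  assume "x \<in> int_span A"
  then obtain c where x: "x = (\<Sum>a\<in>A. of_int (c a) *\<^sub>R a)"
    unfolding int_span_def by blast
  have "(\<Sum>a\<in>A'. of_int (c a) *\<^sub>R a) \<in> int_span B" if "A' \<subseteq> A" for A'
    using finite_subset[OF that assms(1)] that
  proof (induction A' rule: finite_induct)
    case empty
    then show ?case
      by (simp add: zero_in_int_span)
  next
    case (insert a A')
    then show ?case
      using assms(2) by (simp add: int_span_add int_span_scale subset_iff)
  qed
  then show "x \<in> int_span B"
    using x by blast
qed

lemma bounded_zonotope: "bounded (zonotope (Y :: 'a::real_normed_vector set))"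
proof -
  have "norm p \<le> (\<Sum>y\<in>Y. norm y)" if p: "p \<in> zonotope Y" for p
  proof -
    obtain t where p: "p = (\<Sum>y\<in>Y. t y *\<^sub>R y)" and t: "\<forall>y\<in>Y. 0 \<le> t y \<and> t y \<le> 1"
      using p unfolding zonotope_def mem_Collect_eq by blast
    have "norm p \<le> (\<Sum>y\<in>Y. norm (t y *\<^sub>R y))"
      unfolding p by (rule norm_sum)
    also have "\<dots> \<le> (\<Sum>y\<in>Y. norm y)"
      using t by (intro sum_mono) (simp add: mult_left_le_one_le)
    finally show ?thesis .
  qed
  then show ?thesis
    unfolding bounded_iff by blast
qed

definition coord_box :: "'a::real_vector set \<Rightarrow> 'a set \<Rightarrow> real set \<Rightarrow> 'a set" where
  "coord_box X Y T = {p. (\<forall>y\<in>Y. representation X p y \<in> T) \<and> (\<forall>x\<in>X - Y. representation X p x = 0)}"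

lemma coord_box_mono: "T \<subseteq> T' \<Longrightarrow> coord_box X Y T \<subseteq> coord_box X Y T'"
  unfolding coord_box_def by blast

lemma coord_box_insert_zero:
  assumes "A \<subseteq> X"
  shows "coord_box X A (insert 0 T) = (\<Union>B\<in>Pow A. coord_box X B T)"
proof (intro set_eqI iffI)
  fix p
  assume "p \<in> coord_box X A (insert 0 T)"
  then have "p \<in> coord_box X {y\<in>A. representation X p y \<noteq> 0} T"
    using assms unfolding coord_box_def by auto
  then show "p \<in> (\<Union>B\<in>Pow A. coord_box X B T)"
    by (rule UN_I[rotated]) auto
next
  fix p
  assume "p \<in> (\<Union>B\<in>Pow A. coord_box X B T)"
  then obtain B where B: "B \<subseteq> A" "p \<in> coord_box X B T"
    by blast
  show "p \<in> coord_box X A (insert 0 T)"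
    unfolding coord_box_def mem_Collect_eq
  proof (intro conjI ballI)
    fix y
    assume "y \<in> A"
    then show "representation X p y \<in> insert 0 T"
      using B assms by (cases "y \<in> B") (auto simp: coord_box_def)
  next
    fix x
    assume "x \<in> X - A"
    then show "representation X p x = 0"
      using B by (auto simp: coord_box_def)
  qed
qed

lemma coord_box_support:
  assumes "B \<subseteq> X" "0 \<notin> T" "p \<in> coord_box X B T"
  shows "B = {x\<in>X. representation X p x \<noteq> 0}"
proof -
  have "\<forall>y\<in>B. representation X p y \<in> T" "\<forall>x\<in>X - B. representation X p x = 0"
    using assms(3) unfolding coord_box_def by simp_all
  then show ?thesis
    using assms(1,2) by fastforce
qed

lemma coord_box_disjoint:
  assumes "B \<subseteq> X" "B' \<subseteq> X" "B \<noteq> B'" "0 \<notin> T"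
  shows "coord_box X B T \<inter> coord_box X B' T = {}"
proof -
  have "p \<notin> coord_box X B' T" if "p \<in> coord_box X B T" for p
    using that coord_box_support[OF assms(1,4)] coord_box_support[OF assms(2,4)] assms(3) by metis
  then show ?thesis
    by blast
qed

context
  fixes X :: "'a::euclidean_space set"
  assumes X: "independent X" "span X = UNIV"
begin

lemma representation_spanning:
  "representation X (p + q) x = representation X p x + representation X q x"
  "representation X (p - q) x = representation X p x - representation X q x"
  "representation X (c *\<^sub>R p) x = c * representation X p x"
  using X by (simp_all add: real_vector.representation_add real_vector.representation_diff
      real_vector.representation_scale)

lemma linear_representation_spanning: "linear (\<lambda>p. representation X p x)"
  by (rule linearI) (simp_all add: representation_spanning)

lemma sum_representation_spanning: "(\<Sum>x\<in>X. representation X p x *\<^sub>R x) = p"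
  using X by (simp add: real_vector.sum_representation_eq independent_imp_finite)

lemma eq_iff_representation_eq:
  "p = q \<longleftrightarrow> (\<forall>x\<in>X. representation X p x = representation X q x)"
  by (metis (no_types, lifting) sum.cong sum_representation_spanning)

lemma coord_box_eq_combinations:
  assumes "Y \<subseteq> X"
  shows "coord_box X Y T = {\<Sum>y\<in>Y. t y *\<^sub>R y | t. \<forall>y\<in>Y. t y \<in> T}"
proof (intro set_eqI iffI)
  fix p
  assume "p \<in> coord_box X Y T"
  then have "(\<forall>y\<in>Y. representation X p y \<in> T) \<and> (\<forall>x\<in>X - Y. representation X p x = 0)"
    unfolding coord_box_def by blast
  moreover have "(\<Sum>y\<in>Y. representation X p y *\<^sub>R y) = (\<Sum>x\<in>X. representation X p x *\<^sub>R x)"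
    using calculation assms X independent_imp_finite by (intro sum.mono_neutral_left) auto
  ultimately show "p \<in> {\<Sum>y\<in>Y. t y *\<^sub>R y | t. \<forall>y\<in>Y. t y \<in> T}"
    by (auto simp: sum_representation_spanning intro!: exI[of _ "representation X p"])
next
  fix p
  assume "p \<in> {\<Sum>y\<in>Y. t y *\<^sub>R y | t. \<forall>y\<in>Y. t y \<in> T}"
  then show "p \<in> coord_box X Y T"
    using X(1) assms finite_subset[OF assms] independent_imp_finite[OF X(1)]
    by (auto simp: coord_box_def representation_sum_scaled)
qed

lemma zonotope_eq_coord_box: "Y \<subseteq> X \<Longrightarrow> zonotope Y = coord_box X Y {0..1}"
  unfolding zonotope_def by (simp add: coord_box_eq_combinations)

lemma span_eq_coord_box:
  assumes "Y \<subseteq> X"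
  shows "span Y = coord_box X Y UNIV"
proof -
  have "finite Y"
    using X assms independent_imp_finite finite_subset by blast
  then show ?thesis
    using assms by (simp add: coord_box_eq_combinations span_finite full_SetCompr_eq)
qed

lemma int_span_eq_coord_box: "Y \<subseteq> X \<Longrightarrow> int_span Y = coord_box X Y \<int>"
proof -
  have "{\<Sum>y\<in>Y. t y *\<^sub>R y | t. \<forall>y\<in>Y. t y \<in> \<int>} = int_span Y"
  proof (intro set_eqI iffI)
    fix p
    assume "p \<in> {\<Sum>y\<in>Y. t y *\<^sub>R y | t. \<forall>y\<in>Y. t y \<in> \<int>}"
    then obtain t where "p = (\<Sum>y\<in>Y. t y *\<^sub>R y)" "\<forall>y\<in>Y. t y \<in> \<int>"
      by blast
    then have "p = (\<Sum>y\<in>Y. of_int \<lfloor>t y\<rfloor> *\<^sub>R y)"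
      by (simp cong: sum.cong)
    then show "p \<in> int_span Y"
      by (auto simp: int_span_def)
  qed (auto simp: int_span_def)
  then show "Y \<subseteq> X \<Longrightarrow> int_span Y = coord_box X Y \<int>"
    by (simp add: coord_box_eq_combinations)
qed

lemma convex_coord_box:
  assumes "convex T"
  shows "convex (coord_box X Y T)"
proof (rule convexI)
  fix p q and u v :: real
  assume p: "p \<in> coord_box X Y T" and q: "q \<in> coord_box X Y T"
    and uv: "0 \<le> u" "0 \<le> v" "u + v = 1"
  show "u *\<^sub>R p + v *\<^sub>R q \<in> coord_box X Y T"
    unfolding coord_box_def mem_Collect_eq representation_spanning
  proof (intro conjI ballI)
    fix y
    assume "y \<in> Y"
    then have "representation X p y \<in> T" "representation X q y \<in> T"
      using p q unfolding coord_box_def by simp_all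
    then show "u * representation X p y + v * representation X q y \<in> T"
      using convexD[OF assms _ _ uv] by simp
  next
    fix x
    assume "x \<in> X - Y"
    then show "u * representation X p x + v * representation X q x = 0"
      using p q unfolding coord_box_def by simp
  qed
qed

lemma open_coord_box_subset_rel_interior:
  assumes "A \<subseteq> X"
  shows "coord_box X A {0<..<1} \<subseteq> rel_interior (coord_box X A {0..1})"
proof
  let ?c = "representation X"
  fix z
  assume z: "z \<in> coord_box X A {0<..<1}"
  then have z_in: "0 < ?c z a \<and> ?c z a < 1" if "a \<in> A" for a
    using that unfolding coord_box_def by simp
  have z_out: "?c z a = 0" if "a \<in> X - A" for a
    using z that unfolding coord_box_def by simp
  have fin: "finite A"
    using X assms independent_imp_finite finite_subset by blast
  \<comment> \<open>the margin of z from the boundary of the unit box; the element 1 only covers A = {}\<close>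
  define \<epsilon> where "\<epsilon> = Min (insert 1 ((\<lambda>a. min (?c z a) (1 - ?c z a)) ` A))"
  have "\<epsilon> > 0"
    unfolding \<epsilon>_def using fin z_in by (subst Min_gr_iff) auto
  have "\<epsilon> \<le> min (?c z a) (1 - ?c z a)" if "a \<in> A" for a
    unfolding \<epsilon>_def using that fin by (intro Min_le) auto
  then have \<epsilon>_le: "\<epsilon> \<le> ?c z a \<and> \<epsilon> \<le> 1 - ?c z a" if "a \<in> A" for a
    using that by simp
  have extend: "(1 - (1 + \<epsilon>)) *\<^sub>R x + (1 + \<epsilon>) *\<^sub>R z \<in> coord_box X A {0..1}"
    if x: "x \<in> coord_box X A {0..1}" for x
    unfolding coord_box_def mem_Collect_eq representation_spanning
  proof (intro conjI ballI)
    fix a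
    assume a: "a \<in> A"
    then have "0 \<le> ?c x a" "?c x a \<le> 1"
      using x unfolding coord_box_def by simp_all
    then have "0 \<le> \<epsilon> * ?c x a" "\<epsilon> * ?c x a \<le> \<epsilon>" "0 \<le> \<epsilon> * ?c z a" "\<epsilon> * ?c z a \<le> \<epsilon>"
      using \<open>\<epsilon> > 0\<close> z_in[OF a] by (simp_all add: mult_left_le)
    moreover have "(1 - (1 + \<epsilon>)) * ?c x a + (1 + \<epsilon>) * ?c z a = ?c z a + \<epsilon> * ?c z a - \<epsilon> * ?c x a"
      by (simp add: algebra_simps)
    ultimately show "(1 - (1 + \<epsilon>)) * ?c x a + (1 + \<epsilon>) * ?c z a \<in> {0..1}"
      using \<epsilon>_le[OF a] unfolding atLeastAtMost_iff by linarith
  next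
    fix a
    assume "a \<in> X - A"
    then show "(1 - (1 + \<epsilon>)) * ?c x a + (1 + \<epsilon>) * ?c z a = 0"
      using x z_out unfolding coord_box_def by simp
  qed
  have cvx: "convex (coord_box X A {0..1})"
    by (rule convex_coord_box) simp
  have ne: "coord_box X A {0..1} \<noteq> {}"
    using z coord_box_mono[of "{0<..<1}" "{0..1::real}" X A] by fastforce
  show "z \<in> rel_interior (coord_box X A {0..1})"
  proof (subst convex_rel_interior_iff[OF cvx ne], intro ballI exI conjI)
    show "1 < 1 + \<epsilon>"
      using \<open>\<epsilon> > 0\<close> by simp
  qed (rule extend)
qed

lemma face_of_unit_coord_box:
  assumes "A \<subseteq> X"
  shows "coord_box X A {0..1} face_of coord_box X X {0..1}"
proof -
  let ?f = "\<lambda>q. - (\<Sum>x\<in>X - A. representation X q x)"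
  have fin: "finite (X - A)"
    using X independent_imp_finite by blast
  have "linear ?f"
    by (intro linear_compose_neg linear_compose_sum ballI linear_representation_spanning)
  moreover have "?f q \<le> 0" if "q \<in> coord_box X X {0..1}" for q
  proof -
    have "0 \<le> (\<Sum>x\<in>X - A. representation X q x)"
      using that unfolding coord_box_def by (intro sum_nonneg) simp
    then show ?thesis
      by simp
  qed
  ultimately have "{q \<in> coord_box X X {0..1}. ?f q = 0} face_of coord_box X X {0..1}"
    by (intro face_of_linear_level convex_coord_box) simp_all
  moreover have "{q \<in> coord_box X X {0..1}. ?f q = 0} = coord_box X A {0..1}"
  proof (intro set_eqI iffI)
    fix q
    assume "q \<in> {q \<in> coord_box X X {0..1}. ?f q = 0}"
    then have "q \<in> coord_box X X {0..1}" "\<forall>x\<in>X - A. representation X q x = 0"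
      using fin sum_nonneg_eq_0_iff[OF fin] unfolding coord_box_def by auto
    then show "q \<in> coord_box X A {0..1}"
      using assms unfolding coord_box_def by blast
  next
    fix q
    assume "q \<in> coord_box X A {0..1}"
    then have "\<forall>x\<in>X - A. representation X q x = 0" "q \<in> coord_box X X {0..1}"
      unfolding coord_box_def by (auto simp: Ball_def)
    then show "q \<in> {q \<in> coord_box X X {0..1}. ?f q = 0}"
      by simp
  qed
  ultimately show ?thesis
    by simp
qed

lemma internal_to_zonotope_iff:
  assumes "A \<subseteq> X"
  shows "internal_to p (zonotope A) (zonotope X) \<longleftrightarrow> p \<in> coord_box X A {0<..<1}"
proof -
  let ?c = "representation X"
  let ?Z = "\<lambda>Y. coord_box X Y {0..1}"
  have cvx: "convex (?Z X)"
    by (rule convex_coord_box) simp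
  have coord_bounds: "0 \<le> ?c q a \<and> ?c q a \<le> 1" if "q \<in> ?Z X" "a \<in> X" for q a
    using that unfolding coord_box_def by simp
  have zero_face: "{q \<in> ?Z X. - ?c q a = 0} face_of ?Z X" if "a \<in> X" for a
    using coord_bounds[OF _ that] linear_compose_neg[OF linear_representation_spanning]
    by (intro face_of_linear_level[OF cvx]) auto
  have one_face: "{q \<in> ?Z X. ?c q a = 1} face_of ?Z X" if "a \<in> X" for a
    using coord_bounds[OF _ that] linear_representation_spanning
    by (intro face_of_linear_level[OF cvx]) auto
  have ZA_ZX: "?Z A \<subseteq> ?Z X"
    using face_of_unit_coord_box[OF assms] face_of_imp_subset by blast
  show ?thesis
    unfolding zonotope_eq_coord_box[OF assms] zonotope_eq_coord_box[OF order_refl]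
  proof
    assume "internal_to p (?Z A) (?Z X)"
    then have pA: "p \<in> ?Z A" and least: "\<And>G. G face_of ?Z X \<Longrightarrow> p \<in> G \<Longrightarrow> ?Z A \<subseteq> G"
      unfolding internal_to_def by auto
    show "p \<in> coord_box X A {0<..<1}"
      unfolding coord_box_def mem_Collect_eq
    proof (intro conjI ballI)
      fix a
      assume a: "a \<in> A"
      have "a \<in> ?Z A" "?c a a = 1"
        using a assms X(1) unfolding coord_box_def by (auto simp: real_vector.representation_basis)
      then have "?c p a \<noteq> 0"
        using least[OF zero_face] pA ZA_ZX a assms by fastforce
      moreover have "0 \<in> ?Z A"
        unfolding coord_box_def by (simp add: real_vector.representation_zero)
      then have "?c p a \<noteq> 1"
        using least[OF one_face] pA ZA_ZX a assms
        by (fastforce simp: real_vector.representation_zero)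
      ultimately show "?c p a \<in> {0<..<1}"
        using coord_bounds pA ZA_ZX a assms by fastforce
    next
      fix x
      assume "x \<in> X - A"
      then show "?c p x = 0"
        using pA unfolding coord_box_def by simp
    qed
  next
    assume p: "p \<in> coord_box X A {0<..<1}"
    have "p \<in> ?Z A"
      using p coord_box_mono[of "{0<..<1}" "{0..1::real}" X A] by fastforce
    moreover have "?Z A \<subseteq> G" if "G face_of ?Z X" "p \<in> G" for G
      using subset_of_face_of[OF that(1) ZA_ZX] open_coord_box_subset_rel_interior[OF assms] p that(2)
      by blast
    ultimately show "internal_to p (?Z A) (?Z X)"
      unfolding internal_to_def using face_of_unit_coord_box[OF assms] by blast
  qed
qed

lemma lattice_mult_eq_card_half_open_box:
  assumes "X \<subseteq> int_span L" "A \<subseteq> X"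
  shows "lattice_mult (int_span L) A = card (int_span L \<inter> coord_box X A {0..<1})"
  unfolding lattice_mult_def
proof (rule subgroup_index_eq_card_transversal)
  have span_A: "span A = coord_box X A UNIV"
    by (rule span_eq_coord_box[OF assms(2)])
  show "0 \<in> int_span A" "\<And>a b. a \<in> int_span A \<Longrightarrow> b \<in> int_span A \<Longrightarrow> a - b \<in> int_span A"
    by (simp_all add: zero_in_int_span int_span_diff)
  show "int_span L \<inter> coord_box X A {0..<1} \<subseteq> int_span L \<inter> span A"
    using coord_box_mono[of "{0..<1}" UNIV X A] span_A by blast
next
  let ?c = "representation X"
  fix x
  assume x: "x \<in> int_span L \<inter> span A"
  define s where "s = (\<Sum>a\<in>A. of_int \<lfloor>?c x a\<rfloor> *\<^sub>R a)"
  have "s \<in> int_span A"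
    unfolding s_def int_span_def by (auto intro!: exI[of _ "\<lambda>a. \<lfloor>?c x a\<rfloor>"])
  moreover have "int_span A \<subseteq> int_span L"
    using assms X independent_imp_finite finite_subset by (intro int_span_subset) blast+
  ultimately have "x - s \<in> int_span L"
    using x int_span_diff by blast
  moreover have "x - s \<in> coord_box X A {0..<1}"
  proof -
    have "?c s a = (if a \<in> A then of_int \<lfloor>?c x a\<rfloor> else 0)" for a
      unfolding s_def using X(1) assms(2) independent_imp_finite finite_subset
      by (intro representation_sum_scaled) blast+
    moreover have "?c x a = 0" if "a \<in> X - A" for a
      using x that span_eq_coord_box[OF assms(2)] unfolding coord_box_def by blast
    ultimately show ?thesis
      unfolding coord_box_def by (simp add: representation_spanning frac_lt_1 flip: frac_def)
  qed
  ultimately show "\<exists>r\<in>int_span L \<inter> coord_box X A {0..<1}. x - r \<in> int_span A"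
    using \<open>s \<in> int_span A\<close> by (intro bexI[of _ "x - s"]) simp_all
next
  fix r r'
  assume r: "r \<in> int_span L \<inter> coord_box X A {0..<1}" and r': "r' \<in> int_span L \<inter> coord_box X A {0..<1}"
    and "r - r' \<in> int_span A"
  then have "r - r' \<in> coord_box X A \<int>"
    using int_span_eq_coord_box[OF assms(2)] by simp
  have "representation X r a = representation X r' a" if "a \<in> X" for a
  proof (cases "a \<in> A")
    case True
    then have "representation X r a - representation X r' a \<in> \<int>"
      using \<open>r - r' \<in> coord_box X A \<int>\<close> unfolding coord_box_def by (simp add: representation_spanning)
    moreover have "representation X r a \<in> {0..<1}" "representation X r' a \<in> {0..<1}"
      using r r' True unfolding coord_box_def by simp_all
    ultimately show ?thesis
      by (metis atLeastLessThan_iff frac_eq_id frac_unique_iff)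
  next
    case False
    then show ?thesis
      using r r' that unfolding coord_box_def by simp
  qed
  then show "r = r'"
    using eq_iff_representation_eq by blast
qed

lemma finite_int_span_Int_bounded:
  assumes "bounded S"
  shows "finite (int_span X \<inter> S)"
proof -
  let ?c = "representation X"
  have "\<exists>K. \<forall>p\<in>S. \<bar>?c p x\<bar> \<le> K" for x
  proof -
    have "bounded ((\<lambda>p. ?c p x) ` S)"
      using assms linear_representation_spanning
      by (intro bounded_linear_image) (simp_all add: linear_conv_bounded_linear)
    then show ?thesis
      unfolding bounded_real by blast
  qed
  then obtain K where K: "\<And>x p. p \<in> S \<Longrightarrow> \<bar>?c p x\<bar> \<le> K x"
    by metis
  define box where "box x = (of_int ` {-\<lceil>K x\<rceil>..\<lceil>K x\<rceil>} :: real set)" for x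
  have "inj_on (\<lambda>p. restrict (?c p) X) (int_span X \<inter> S)"
    using eq_iff_representation_eq by (intro inj_onI) (metis restrict_apply')
  moreover have "(\<lambda>p. restrict (?c p) X) ` (int_span X \<inter> S) \<subseteq> PiE X box"
  proof
    fix f
    assume "f \<in> (\<lambda>p. restrict (?c p) X) ` (int_span X \<inter> S)"
    then obtain p where p: "p \<in> int_span X" "p \<in> S" and f: "f = restrict (?c p) X"
      by blast
    have "?c p x \<in> box x" if x: "x \<in> X" for x
    proof -
      have "?c p x \<in> \<int>"
        using p x int_span_eq_coord_box[OF order_refl] unfolding coord_box_def by simp
      then obtain k where k: "?c p x = of_int k"
        by (rule Ints_cases)
      then have "\<bar>k\<bar> \<le> \<lceil>K x\<rceil>"
        using K[OF p(2), of x] by linarith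
      then have "k \<in> {-\<lceil>K x\<rceil>..\<lceil>K x\<rceil>}"
        by (simp add: abs_le_iff)
      then show ?thesis
        unfolding box_def k by (rule imageI)
    qed
    then show "f \<in> PiE X box"
      unfolding f by (simp add: restrict_PiE_iff)
  qed
  moreover have "finite (PiE X box)"
    using X independent_imp_finite unfolding box_def by (intro finite_PiE) auto
  ultimately show ?thesis
    using finite_subset inj_on_finite by blast
qed

end

lemma lattice_mult_eq_sum_card_open_boxes:
  fixes L X A :: "'a::euclidean_space set"
  assumes L: "independent L" "span L = UNIV"
    and X: "independent X" "span X = UNIV" "X \<subseteq> int_span L" and A: "A \<subseteq> X"
  shows "lattice_mult (int_span L) A = (\<Sum>B\<in>Pow A. card (int_span L \<inter> coord_box X B {0<..<1}))"
proof -
  have "insert 0 {0<..<1} = {0..<1::real}"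
    by auto
  then have half_open: "int_span L \<inter> coord_box X A {0..<1}
      = (\<Union>B\<in>Pow A. int_span L \<inter> coord_box X B {0<..<1})"
    using coord_box_insert_zero[OF A, of "{0<..<1}"] by (metis Int_UN_distrib)
  have "card (\<Union>B\<in>Pow A. int_span L \<inter> coord_box X B {0<..<1})
      = (\<Sum>B\<in>Pow A. card (int_span L \<inter> coord_box X B {0<..<1}))"
  proof (rule card_UN_disjoint)
    show "finite (Pow A)"
      using A X(1) independent_imp_finite finite_subset by blast
    show "\<forall>B\<in>Pow A. finite (int_span L \<inter> coord_box X B {0<..<1})"
    proof
      fix B
      assume "B \<in> Pow A"
      then have "B \<subseteq> X"
        using A by blast
      then have "coord_box X B {0..1} \<subseteq> zonotope X"
        unfolding zonotope_eq_coord_box[OF X(1,2) order_refl]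
        by (rule face_of_imp_subset[OF face_of_unit_coord_box[OF X(1,2)]])
      moreover have "coord_box X B {0<..<1} \<subseteq> coord_box X B {0..1}"
        by (rule coord_box_mono) auto
      ultimately have "int_span L \<inter> coord_box X B {0<..<1} \<subseteq> int_span L \<inter> zonotope X"
        by blast
      then show "finite (int_span L \<inter> coord_box X B {0<..<1})"
        using finite_int_span_Int_bounded[OF L bounded_zonotope] finite_subset by blast
    qed
    show "\<forall>B\<in>Pow A. \<forall>B'\<in>Pow A. B \<noteq> B' \<longrightarrow>
        (int_span L \<inter> coord_box X B {0<..<1}) \<inter> (int_span L \<inter> coord_box X B' {0<..<1}) = {}"
    proof (intro ballI impI)
      fix B B'
      assume "B \<in> Pow A" "B' \<in> Pow A" "B \<noteq> B'"
      then have "coord_box X B {0<..<1} \<inter> coord_box X B' {0<..<1} = {}"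
        using A by (intro coord_box_disjoint) auto
      then show "(int_span L \<inter> coord_box X B {0<..<1}) \<inter> (int_span L \<inter> coord_box X B' {0<..<1}) = {}"
        by blast
    qed
  qed
  then show ?thesis
    using lattice_mult_eq_card_half_open_box[OF X A] half_open by simp
qed

theorem lemma4p3:
  fixes L X A :: "'a::euclidean_space set"
  assumes "independent L" and "card L = DIM('a)"
    and "X \<subseteq> int_span L" and "independent X" and "span X = UNIV"
    and "A \<subseteq> X"
  shows "int (card {p \<in> int_span L \<inter> zonotope X. internal_to p (zonotope A) (zonotope X)})
         = (\<Sum>B\<in>Pow A. (-1) ^ (card A - card B) * int (lattice_mult (int_span L) B))"
proof -
  have L: "span L = UNIV"
    using dim_eq_full[of L] dim_eq_card_independent[OF assms(1)] assms(2) by simp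
  have fin: "finite A"
    using assms(4,6) independent_imp_finite finite_subset by blast
  define h where "h B = int (card (int_span L \<inter> coord_box X B {0<..<1}))" for B
  have "{p \<in> int_span L \<inter> zonotope X. internal_to p (zonotope A) (zonotope X)}
      = int_span L \<inter> coord_box X A {0<..<1}"
  proof -
    have "p \<in> zonotope X" if "internal_to p (zonotope A) (zonotope X)" for p
      using that face_of_imp_subset unfolding internal_to_def by blast
    then show ?thesis
      using internal_to_zonotope_iff[OF assms(4,5,6)] by blast
  qed
  then have "int (card {p \<in> int_span L \<inter> zonotope X. internal_to p (zonotope A) (zonotope X)}) = h A"
    by (simp add: h_def)
  also have "h A = (\<Sum>B\<in>Pow A. (-1) ^ (card A - card B) * (\<Sum>C\<in>Pow B. h C))"
    using fin by (rule inclusion_exclusion_mobius[OF refl])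
  also have "\<dots> = (\<Sum>B\<in>Pow A. (-1) ^ (card A - card B) * int (lattice_mult (int_span L) B))"
    using lattice_mult_eq_sum_card_open_boxes[OF assms(1) L assms(4,5,3)] assms(6)
    by (intro sum.cong) (auto simp: h_def)
  finally show ?thesis .
qed

end
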